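(* Let $m\ge3$ be an integer and let $\mathbf{C}$ be a binary linear $[2^{2m-3}+2^{m-2}-1,\ 2m-2]$ code whose set of nonzero weights is $\{2^{2m-4},\,2^{2m-4}+2^{m-2}\}$. Then the code $\mathbf{C}'$ obtained from $\mathbf{C}$ by the extension construction is a minimal binary linear $[3\cdot2^{2m-4}-1,\ 2m-2,\ 2^{2m-4}]_2$ code with maximum weight $2^{2m-3}$ which violates the Ashikhmin–Barg condition. Moreover, when $m\ge4$, $\mathbf{C}'$ is self-orthogonal.
   Context: Extension construction for a binary $[N,K]$ code $\mathbf{D}$, $K\ge2$, with minimum nonzero weight $w_{min}$, maximum weight $w_{max}$ and $n'=2w_{min}-w_{max}\ge1$: choose a basis $\mathbf{r}_1,\dots,\mathbf{r}_K$ with $wt(\mathbf{r}_1)=w_{max}$, $wt(\mathbf{r}_2)=w_{min}$; the extended code is generated by $(\mathbf{1},\mathbf{r}_1),(\mathbf{0},\mathbf{r}_2),\dots,(\mathbf{0},\mathbf{r}_K)$ in $\mathbf{F}_2^{n'+N}$, with $\mathbf{1},\mathbf{0}\in\mathbf{F}_2^{n'}$. Self-orthogonal: $\mathbf{C}\subseteq\mathbf{C}^\perp$. Minimal code: nonzero codewords with nested supports are equal. Ashikhmin–Barg condition (binary): $w_{min}/w_{max}>1/2$. *)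

theory Defs
  imports Complex_Main "HOL-Library.Z2"
begin

text \<open>Vectors of F_2^N are represented as functions nat => bit vanishing outside {0..<N}.\<close>

type_synonym bvec = "nat \<Rightarrow> bit"

definition vecs :: "nat \<Rightarrow> bvec set" where
  "vecs N = {v. \<forall>i\<ge>N. v i = 0}"

definition vadd :: "bvec \<Rightarrow> bvec \<Rightarrow> bvec" where
  "vadd x y = (\<lambda>i. x i + y i)"

definition zvec :: bvec where
  "zvec = (\<lambda>i. 0)"

definition supp :: "bvec \<Rightarrow> nat set" where
  "supp v = {i. v i \<noteq> 0}"

definition wt :: "bvec \<Rightarrow> nat" where
  "wt v = card (supp v)"

definition hdist :: "bvec \<Rightarrow> bvec \<Rightarrow> nat" where
  "hdist x y = card {i. x i \<noteq> y i}"

definition inner :: "nat \<Rightarrow> bvec \<Rightarrow> bvec \<Rightarrow> bit" where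
  "inner N x y = (\<Sum>i<N. x i * y i)"

text \<open>Binary linear code of length N (over F_2 closure under addition suffices).\<close>
definition binary_linear_code :: "nat \<Rightarrow> bvec set \<Rightarrow> bool" where
  "binary_linear_code N C \<longleftrightarrow> C \<subseteq> vecs N \<and> zvec \<in> C \<and> (\<forall>x\<in>C. \<forall>y\<in>C. vadd x y \<in> C)"

definition span_of :: "nat \<Rightarrow> (nat \<Rightarrow> bvec) \<Rightarrow> bvec set" where
  "span_of K r = {(\<lambda>j. \<Sum>i\<in>S. r i j) | S. S \<subseteq> {1..K}}"

definition lin_indep :: "nat \<Rightarrow> (nat \<Rightarrow> bvec) \<Rightarrow> bool" where
  "lin_indep K r \<longleftrightarrow> (\<forall>S \<subseteq> {1..K}. (\<lambda>j. \<Sum>i\<in>S. r i j) = zvec \<longrightarrow> S = {})"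

definition is_basis :: "bvec set \<Rightarrow> nat \<Rightarrow> (nat \<Rightarrow> bvec) \<Rightarrow> bool" where
  "is_basis C K r \<longleftrightarrow> (\<forall>i\<in>{1..K}. r i \<in> C) \<and> lin_indep K r \<and> span_of K r = C"

definition code_dim :: "bvec set \<Rightarrow> nat \<Rightarrow> bool" where
  "code_dim C K \<longleftrightarrow> (\<exists>r. is_basis C K r)"

definition nonzero_weights :: "bvec set \<Rightarrow> nat set" where
  "nonzero_weights C = {wt c | c. c \<in> C \<and> c \<noteq> zvec}"

definition min_wt :: "bvec set \<Rightarrow> nat" where
  "min_wt C = Min (nonzero_weights C)"

definition max_wt :: "bvec set \<Rightarrow> nat" where
  "max_wt C = Max (nonzero_weights C)"

definition min_distance :: "bvec set \<Rightarrow> nat" where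
  "min_distance C = Min {hdist x y | x y. x \<in> C \<and> y \<in> C \<and> x \<noteq> y}"

definition minimal_code :: "bvec set \<Rightarrow> bool" where
  "minimal_code C \<longleftrightarrow> (\<forall>c1\<in>C. \<forall>c2\<in>C. c1 \<noteq> zvec \<longrightarrow> c2 \<noteq> zvec \<longrightarrow> supp c1 \<subseteq> supp c2 \<longrightarrow> c1 = c2)"

definition dual_code :: "nat \<Rightarrow> bvec set \<Rightarrow> bvec set" where
  "dual_code N C = {v \<in> vecs N. \<forall>c\<in>C. inner N v c = 0}"

definition self_orthogonal :: "nat \<Rightarrow> bvec set \<Rightarrow> bool" where
  "self_orthogonal N C \<longleftrightarrow> C \<subseteq> dual_code N C"

definition ashikhmin_barg :: "bvec set \<Rightarrow> bool" where
  "ashikhmin_barg C \<longleftrightarrow> real (min_wt C) / real (max_wt C) > 1/2"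

definition concat_vec :: "nat \<Rightarrow> bvec \<Rightarrow> bvec \<Rightarrow> bvec" where
  "concat_vec n' u v = (\<lambda>i. if i < n' then u i else v (i - n'))"

definition ones :: "nat \<Rightarrow> bvec" where
  "ones n' = (\<lambda>i. if i < n' then 1 else 0)"

definition ext_code :: "bvec set \<Rightarrow> nat \<Rightarrow> (nat \<Rightarrow> bvec) \<Rightarrow> bvec set" where
  "ext_code C K r =
     (let n' = 2 * min_wt C - max_wt C
      in span_of K (\<lambda>i. if i = 1 then concat_vec n' (ones n') (r 1) else concat_vec n' zvec (r i)))"

end

theory Submission
  imports Defs
begin

text \<open>
  A codeword of the extension is \<open>(u, c)\<close> with \<open>c \<in> C\<close>, where the head \<open>u\<close> of length
  \<open>n' = 2 w_min - w_max > 0\<close> is all-one if \<open>r 1\<close> occurs in \<open>c\<close> and zero otherwise. So nonzero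
  weights lie in \<open>[w_min, w_max]\<close> (head zero) or in \<open>[n' + w_min, 2 w_min]\<close> (head one), and
  \<open>(0, r 2)\<close>, \<open>(1, r 1)\<close> attain \<open>w_min\<close> and \<open>2 w_min\<close>; the weight ratio is exactly 1/2.
  If \<open>supp x \<subset> supp y\<close>, then \<open>wt y = wt x + wt (x + y) \<ge> 2 w_min\<close> forces
  \<open>wt y = 2 w_min\<close> and \<open>wt x = wt (x + y) = w_min\<close>: \<open>y\<close> has head one but \<open>x\<close> and \<open>x + y\<close> head
  zero, which is impossible since heads add. For \<open>m \<ge> 4\<close> all weights of \<open>C\<close>, hence \<open>n'\<close> and all
  weights of the extension, are divisible by 4, and a doubly-even binary code is self-orthogonal
  because \<open>wt (x + y) = wt x + wt y - 2 |supp x \<inter> supp y|\<close>.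
\<close>

lemma bit_add_eq_0_iff: "(a::bit) + b = 0 \<longleftrightarrow> a = b"
  by (cases a; cases b) simp_all

lemma vadd_eq_zvec_iff: "vadd x y = zvec \<longleftrightarrow> x = y"
  unfolding vadd_def zvec_def fun_eq_iff by (simp only: bit_add_eq_0_iff)

lemma vadd_zvec_right [simp]: "vadd x zvec = x"
  unfolding vadd_def zvec_def by (simp only: add_0_right)

lemma wt_zvec [simp]: "wt zvec = 0"
  by (simp add: wt_def supp_def zvec_def)

lemma supp_vadd: "supp (vadd x y) = (supp x - supp y) \<union> (supp y - supp x)"
  by (auto simp: supp_def vadd_def)

lemma supp_subset_vecs: "v \<in> vecs N \<Longrightarrow> supp v \<subseteq> {..<N}"
  by (auto simp: vecs_def supp_def not_less[symmetric])

lemma finite_supp_vecs: "v \<in> vecs N \<Longrightarrow> finite (supp v)"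
  using supp_subset_vecs finite_subset by blast

lemma wt_vadd:
  assumes "finite (supp x)" "finite (supp y)"
  shows "wt (vadd x y) + 2 * card (supp x \<inter> supp y) = wt x + wt y"
proof -
  have "card (supp x) = card (supp x - supp y) + card (supp x \<inter> supp y)"
       "card (supp y) = card (supp y - supp x) + card (supp x \<inter> supp y)"
    using assms by (metis Int_commute card_Int_Diff add.commute)+
  moreover have "card (supp (vadd x y)) = card (supp x - supp y) + card (supp y - supp x)"
    unfolding supp_vadd using assms by (intro card_Un_disjoint) auto
  ultimately show ?thesis unfolding wt_def by simp
qed

lemma hdist_eq_wt_vadd: "hdist x y = wt (vadd x y)"
  unfolding hdist_def wt_def supp_def vadd_def by (simp only: bit_add_eq_0_iff)

lemma inner_eq_card_supp:
  assumes "supp x \<subseteq> {..<L}"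
  shows "inner L x y = of_nat (card (supp x \<inter> supp y))"
proof -
  have "inner L x y = (\<Sum>i<L. of_bool (x i \<noteq> 0 \<and> y i \<noteq> 0))"
    unfolding inner_def by (intro sum.cong) auto
  also have "\<dots> = of_nat (card ({..<L} \<inter> {i. x i \<noteq> 0 \<and> y i \<noteq> 0}))"
    by (simp only: sum_of_bool_eq finite_lessThan)
  also have "{..<L} \<inter> {i. x i \<noteq> 0 \<and> y i \<noteq> 0} = supp x \<inter> supp y"
    using assms unfolding supp_def by blast
  finally show ?thesis .
qed

lemma concat_vec_shift [simp]: "concat_vec n u v (j + n) = v j"
  by (simp add: concat_vec_def)

lemma concat_vec_in_vecs: "v \<in> vecs N \<Longrightarrow> concat_vec n u v \<in> vecs (n + N)"
  by (simp add: vecs_def concat_vec_def)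

lemma wt_concat_vec_ones:
  assumes "finite (supp u)"
  shows "wt (concat_vec n (ones n) u) = n + wt u"
proof -
  have supp_eq: "supp (concat_vec n (ones n) u) = {..<n} \<union> (\<lambda>k. k + n) ` supp u"
    unfolding supp_def concat_vec_def ones_def by (rule set_eqI) (auto simp: image_iff)
  show ?thesis
    unfolding wt_def supp_eq using assms by (subst card_Un_disjoint) (auto simp: card_image)
qed

lemma wt_concat_vec_zvec: "wt (concat_vec n zvec u) = wt u"
proof -
  have "supp (concat_vec n zvec u) = (\<lambda>k. k + n) ` supp u"
    unfolding supp_def concat_vec_def zvec_def by (rule set_eqI) (auto simp: image_iff)
  then show ?thesis
    unfolding wt_def by (simp add: card_image)
qed

lemma self_orthogonal_if_doubly_even:
  assumes code: "binary_linear_code L E" and doubly_even: "\<forall>w \<in> nonzero_weights E. 4 dvd w"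
  shows "self_orthogonal L E"
  unfolding self_orthogonal_def dual_code_def
proof (intro subsetI CollectI conjI ballI)
  have dvd4: "4 dvd wt x" if "x \<in> E" for x
    using that doubly_even unfolding nonzero_weights_def by (cases "x = zvec") auto
  fix x c assume x: "x \<in> E" and c: "c \<in> E"
  from code x c have vecs: "x \<in> vecs L" "c \<in> vecs L" and "vadd x c \<in> E"
    unfolding binary_linear_code_def by blast+
  then have "4 dvd wt (vadd x c)" "4 dvd wt x + wt c"
    using dvd4 x c by auto
  moreover have "wt (vadd x c) + 2 * card (supp x \<inter> supp c) = wt x + wt c"
    using vecs by (intro wt_vadd finite_supp_vecs)
  ultimately have "4 dvd 2 * card (supp x \<inter> supp c)"
    by (metis dvd_add_right_iff)
  then have "even (card (supp x \<inter> supp c))"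
    using dvd_mult_cancel_left[of "2::nat" 2] by simp
  then show "inner L x c = 0"
    using inner_eq_card_supp[OF supp_subset_vecs[OF vecs(1)]] by (auto elim: evenE)
  show "x \<in> vecs L"
    by (fact vecs(1))
qed

lemma min_distance_eq_min_wt:
  assumes "binary_linear_code L E"
  shows "min_distance E = min_wt E"
proof -
  have "{hdist x y | x y. x \<in> E \<and> y \<in> E \<and> x \<noteq> y} = nonzero_weights E"
  proof (intro equalityI subsetI)
    fix k assume "k \<in> {hdist x y | x y. x \<in> E \<and> y \<in> E \<and> x \<noteq> y}"
    then obtain x y where "x \<in> E" "y \<in> E" "x \<noteq> y" "k = hdist x y"
      by blast
    with assms show "k \<in> nonzero_weights E"
      unfolding nonzero_weights_def binary_linear_code_def hdist_eq_wt_vadd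
      by (auto simp: vadd_eq_zvec_iff)
  next
    fix k assume "k \<in> nonzero_weights E"
    then obtain c where "c \<in> E" "c \<noteq> zvec" "k = hdist c zvec"
      unfolding nonzero_weights_def hdist_eq_wt_vadd by auto
    with assms show "k \<in> {hdist x y | x y. x \<in> E \<and> y \<in> E \<and> x \<noteq> y}"
      unfolding binary_linear_code_def by blast
  qed
  then show ?thesis
    unfolding min_distance_def min_wt_def by simp
qed

definition lincomb :: "(nat \<Rightarrow> bvec) \<Rightarrow> nat set \<Rightarrow> bvec" where
  "lincomb g S = (\<lambda>j. \<Sum>i\<in>S. g i j)"

lemma span_of_eq_image: "span_of K g = lincomb g ` Pow {1..K}"
  unfolding span_of_def lincomb_def by blast

lemma lin_indep_iff_lincomb:
  "lin_indep K g \<longleftrightarrow> (\<forall>S \<subseteq> {1..K}. lincomb g S = zvec \<longrightarrow> S = {})"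
  unfolding lin_indep_def lincomb_def ..

lemma lincomb_empty [simp]: "lincomb g {} = zvec"
  by (simp add: lincomb_def zvec_def)

lemma lincomb_singleton [simp]: "lincomb g {i} = g i"
  unfolding lincomb_def by (simp only: sum.insert[OF finite.emptyI] sum.empty empty_iff add_0_right not_False_eq_True)

lemma vadd_lincomb:
  assumes "finite S" "finite T"
  shows "vadd (lincomb g S) (lincomb g T) = lincomb g (sym_diff S T)"
proof
  fix j
  have "(\<Sum>i\<in>S. g i j) = (\<Sum>i\<in>S \<inter> T. g i j) + (\<Sum>i\<in>S - T. g i j)"
       "(\<Sum>i\<in>T. g i j) = (\<Sum>i\<in>S \<inter> T. g i j) + (\<Sum>i\<in>T - S. g i j)"
    using assms by (metis sum.Int_Diff Int_commute)+
  moreover have "(\<Sum>i\<in>(S - T) \<union> (T - S). g i j) = (\<Sum>i\<in>S - T. g i j) + (\<Sum>i\<in>T - S. g i j)"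
    using assms by (intro sum.union_disjoint) auto
  moreover have "\<And>a b c::bit. (c + a) + (c + b) = a + b"
    by (metis add.assoc add.commute add.right_neutral bit_add_eq_0_iff)
  ultimately show "vadd (lincomb g S) (lincomb g T) j = lincomb g (sym_diff S T) j"
    unfolding vadd_def lincomb_def by simp
qed

lemma lincomb_in_vecs: "(\<And>i. i \<in> S \<Longrightarrow> g i \<in> vecs L) \<Longrightarrow> lincomb g S \<in> vecs L"
  unfolding vecs_def lincomb_def by simp

lemma binary_linear_code_span:
  assumes "\<And>i. i \<in> {1..K} \<Longrightarrow> g i \<in> vecs L"
  shows "binary_linear_code L (span_of K g)"
  unfolding binary_linear_code_def span_of_eq_image
proof (intro conjI ballI subsetI)
  show "zvec \<in> lincomb g ` Pow {1..K}"
    by (metis Pow_bottom image_eqI lincomb_empty)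
  fix x y assume "x \<in> lincomb g ` Pow {1..K}" "y \<in> lincomb g ` Pow {1..K}"
  then show "vadd x y \<in> lincomb g ` Pow {1..K}"
    by (auto simp: vadd_lincomb finite_subset)
next
  fix x assume "x \<in> lincomb g ` Pow {1..K}"
  with assms show "x \<in> vecs L"
    by (auto intro!: lincomb_in_vecs)
qed

lemma is_basis_span: "lin_indep K g \<Longrightarrow> is_basis (span_of K g) K g"
  unfolding is_basis_def span_of_eq_image by (auto intro: image_eqI[of _ _ "{_}"])

lemma lincomb_concat_vec:
  "lincomb (\<lambda>i. concat_vec n (u i) (v i)) S = concat_vec n (lincomb u S) (lincomb v S)"
  by (simp add: lincomb_def concat_vec_def fun_eq_iff)

lemma lincomb_single_support:
  "finite S \<Longrightarrow> lincomb (\<lambda>i. if i = a then u else zvec) S = (if a \<in> S then u else zvec)"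
  by (simp add: lincomb_def zvec_def fun_eq_iff if_distrib[of "\<lambda>f. f _"] sum.delta cong: if_cong)

locale extension_construction =
  fixes N K :: nat and C :: "bvec set" and r :: "nat \<Rightarrow> bvec"
  assumes code: "binary_linear_code N C"
    and basis: "is_basis C K r"
    and two_le_dim: "2 \<le> K"
    and wt_r1: "wt (r 1) = max_wt C"
    and wt_r2: "wt (r 2) = min_wt C"
    and max_wt_less: "max_wt C < 2 * min_wt C"
begin

abbreviation n' :: nat where
  "n' \<equiv> 2 * min_wt C - max_wt C"

abbreviation C' :: "bvec set" where
  "C' \<equiv> ext_code C K r"

definition ext_gen :: "nat \<Rightarrow> bvec" where
  "ext_gen i = concat_vec n' (if i = 1 then ones n' else zvec) (r i)"

definition ext_word :: "nat set \<Rightarrow> bvec" where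
  "ext_word S = concat_vec n' (if 1 \<in> S then ones n' else zvec) (lincomb r S)"

lemma C_eq_image: "C = lincomb r ` Pow {1..K}"
  using basis unfolding is_basis_def span_of_eq_image by simp

lemma lincomb_nonzero: "S \<subseteq> {1..K} \<Longrightarrow> S \<noteq> {} \<Longrightarrow> lincomb r S \<noteq> zvec"
  using basis unfolding is_basis_def lin_indep_iff_lincomb by blast

lemma wt_lincomb_in_nonzero_weights:
  "S \<subseteq> {1..K} \<Longrightarrow> S \<noteq> {} \<Longrightarrow> wt (lincomb r S) \<in> nonzero_weights C"
  unfolding nonzero_weights_def using C_eq_image lincomb_nonzero by blast

lemma finite_nonzero_weights: "finite (nonzero_weights C)"
  unfolding nonzero_weights_def using C_eq_image by simp

lemma min_wt_in_nonzero_weights: "min_wt C \<in> nonzero_weights C"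
  and max_wt_in_nonzero_weights: "max_wt C \<in> nonzero_weights C"
proof -
  have "{2} \<subseteq> {1..K}"
    using two_le_dim by simp
  then have "nonzero_weights C \<noteq> {}"
    using wt_lincomb_in_nonzero_weights by blast
  then show "min_wt C \<in> nonzero_weights C" "max_wt C \<in> nonzero_weights C"
    unfolding min_wt_def max_wt_def using finite_nonzero_weights by simp_all
qed

lemma nonzero_weights_bounds:
  assumes "w \<in> nonzero_weights C"
  shows "min_wt C \<le> w" "w \<le> max_wt C"
  using assms finite_nonzero_weights unfolding min_wt_def max_wt_def by simp_all

lemma ext_code_eq_span: "C' = span_of K ext_gen"
  unfolding ext_code_def Let_def ext_gen_def
  by (rule arg_cong[of _ _ "span_of K"]) (simp add: fun_eq_iff)

lemma lincomb_ext_gen: "S \<subseteq> {1..K} \<Longrightarrow> lincomb ext_gen S = ext_word S"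
  unfolding ext_gen_def ext_word_def lincomb_concat_vec
  by (subst lincomb_single_support) (auto intro: finite_subset)

lemma ext_code_eq_image: "C' = ext_word ` Pow {1..K}"
  unfolding ext_code_eq_span span_of_eq_image by (auto simp: lincomb_ext_gen)

lemma ext_word_in_ext_code: "S \<subseteq> {1..K} \<Longrightarrow> ext_word S \<in> C'"
  unfolding ext_code_eq_image by blast

lemma ext_word_empty [simp]: "ext_word {} = zvec"
  by (simp add: ext_word_def concat_vec_def zvec_def)

lemma ext_word_shift: "ext_word S (j + n') = lincomb r S j"
  by (simp add: ext_word_def)

lemma ext_word_0: "ext_word S 0 = (if 1 \<in> S then 1 else 0)"
proof -
  have "0 < n'"
    using max_wt_less by simp
  then show ?thesis
    unfolding ext_word_def concat_vec_def ones_def zvec_def by simp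
qed

lemma ext_word_nonzero:
  assumes "S \<subseteq> {1..K}" "S \<noteq> {}"
  shows "ext_word S \<noteq> zvec"
proof
  assume "ext_word S = zvec"
  then have "lincomb r S = zvec"
    unfolding fun_eq_iff by (metis ext_word_shift zvec_def)
  with assms lincomb_nonzero show False
    by blast
qed

lemma wt_ext_word:
  assumes "S \<subseteq> {1..K}"
  shows "wt (ext_word S) = (if 1 \<in> S then n' else 0) + wt (lincomb r S)"
proof -
  have "lincomb r S \<in> vecs N"
    using assms code C_eq_image unfolding binary_linear_code_def by blast
  then show ?thesis
    unfolding ext_word_def
    by (cases "1 \<in> S") (simp_all only: if_True if_False wt_concat_vec_ones wt_concat_vec_zvec
        finite_supp_vecs add_0)
qed

lemma ext_binary_linear_code: "binary_linear_code (n' + N) C'"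
proof -
  have "r i \<in> vecs N" if "i \<in> {1..K}" for i
    using that basis code unfolding is_basis_def binary_linear_code_def by blast
  then show ?thesis
    unfolding ext_code_eq_span ext_gen_def by (intro binary_linear_code_span concat_vec_in_vecs)
qed

lemma ext_code_dim: "code_dim C' K"
proof -
  have "lin_indep K ext_gen"
    unfolding lin_indep_iff_lincomb using ext_word_nonzero by (auto simp: lincomb_ext_gen)
  then show ?thesis
    unfolding code_dim_def ext_code_eq_span by (blast intro: is_basis_span)
qed

lemma ext_nonzero_weight_cases:
  assumes "x \<in> C'" "x \<noteq> zvec"
  obtains "x 0 = 0" "wt x \<in> nonzero_weights C"
    | w where "x 0 = 1" "w \<in> nonzero_weights C" "wt x = n' + w"
proof -
  obtain S where S: "S \<subseteq> {1..K}" "x = ext_word S"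
    using assms(1) unfolding ext_code_eq_image by blast
  with assms(2) have "wt (lincomb r S) \<in> nonzero_weights C"
    by (intro wt_lincomb_in_nonzero_weights) auto
  with S that show thesis
    by (cases "1 \<in> S") (simp_all add: ext_word_0 wt_ext_word)
qed

lemma ext_nonzero_weights:
  "nonzero_weights C' \<subseteq> nonzero_weights C \<union> (+) n' ` nonzero_weights C"
  unfolding nonzero_weights_def[of C']
  by (auto elim!: ext_nonzero_weight_cases)

lemma ext_self_orthogonal_if_doubly_even:
  assumes doubly_even: "\<forall>w \<in> nonzero_weights C. 4 dvd w"
  shows "self_orthogonal (n' + N) C'"
proof (rule self_orthogonal_if_doubly_even[OF ext_binary_linear_code])
  have "4 dvd n'"
    using doubly_even min_wt_in_nonzero_weights max_wt_in_nonzero_weights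
    by (simp add: dvd_diff_nat)
  then show "\<forall>w \<in> nonzero_weights C'. 4 dvd w"
    using doubly_even ext_nonzero_weights by auto
qed

lemma ext_wt_bounds:
  assumes "x \<in> C'" "x \<noteq> zvec"
  shows "min_wt C \<le> wt x" "wt x \<le> 2 * min_wt C"
  using assms max_wt_less
  by (cases rule: ext_nonzero_weight_cases; fastforce dest: nonzero_weights_bounds)+

lemma ext_head_0_if_wt_eq_min_wt:
  assumes "x \<in> C'" "x \<noteq> zvec" "wt x = min_wt C"
  shows "x 0 = 0"
  using assms(1,2)
proof (cases rule: ext_nonzero_weight_cases)
  case (2 w)
  with assms(3) nonzero_weights_bounds(1)[of w] max_wt_less show ?thesis
    by arith
qed

lemma ext_head_1_if_wt_eq_twice_min_wt:
  assumes "x \<in> C'" "x \<noteq> zvec" "wt x = 2 * min_wt C"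
  shows "x 0 = 1"
  using assms(1,2)
proof (cases rule: ext_nonzero_weight_cases)
  case 1
  with assms(3) nonzero_weights_bounds(2)[of "wt x"] max_wt_less show ?thesis
    by arith
qed

lemma wt_ext_word_1: "wt (ext_word {1}) = 2 * min_wt C"
proof -
  have "wt (ext_word {1}) = n' + wt (r 1)"
    using wt_ext_word[of "{1}"] two_le_dim by simp
  with wt_r1 max_wt_less show ?thesis
    by arith
qed

lemma wt_ext_word_2: "wt (ext_word {2}) = min_wt C"
  using wt_ext_word[of "{2}"] wt_r2 two_le_dim by simp

lemma ext_singleton_weights: "{min_wt C, 2 * min_wt C} \<subseteq> nonzero_weights C'"
proof -
  have "{1} \<subseteq> {1..K}" "{2} \<subseteq> {1..K}"
    using two_le_dim by auto
  then have "ext_word {1} \<in> C'" "ext_word {1} \<noteq> zvec" "ext_word {2} \<in> C'" "ext_word {2} \<noteq> zvec"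
    by (simp_all only: ext_word_in_ext_code ext_word_nonzero insert_not_empty not_False_eq_True)
  then have "wt (ext_word {1}) \<in> nonzero_weights C'" "wt (ext_word {2}) \<in> nonzero_weights C'"
    unfolding nonzero_weights_def by blast+
  then show ?thesis
    unfolding wt_ext_word_1 wt_ext_word_2 by simp
qed

lemma ext_min_wt: "min_wt C' = min_wt C"
  and ext_max_wt: "max_wt C' = 2 * min_wt C"
proof -
  have "finite (nonzero_weights C')"
    using ext_nonzero_weights finite_nonzero_weights finite_subset by blast
  moreover have "min_wt C \<le> w" "w \<le> 2 * min_wt C" if "w \<in> nonzero_weights C'" for w
    using that ext_wt_bounds unfolding nonzero_weights_def by auto
  ultimately show "min_wt C' = min_wt C" "max_wt C' = 2 * min_wt C"
    unfolding min_wt_def[of C'] max_wt_def[of C'] using ext_singleton_weights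
    by (simp_all add: Min_eqI Max_eqI)
qed

lemma ext_min_distance: "min_distance C' = min_wt C"
  using min_distance_eq_min_wt[OF ext_binary_linear_code] ext_min_wt by simp

lemma ext_not_ashikhmin_barg: "\<not> ashikhmin_barg C'"
  unfolding ashikhmin_barg_def ext_min_wt ext_max_wt by (cases "min_wt C = 0") simp_all

lemma ext_minimal_code: "minimal_code C'"
  unfolding minimal_code_def
proof (intro ballI impI)
  fix x y assume x: "x \<in> C'" "x \<noteq> zvec" and y: "y \<in> C'" "y \<noteq> zvec"
    and supp_le: "supp x \<subseteq> supp y"
  show "x = y"
  proof (rule ccontr)
    assume "x \<noteq> y"
    define z where "z = vadd x y"
    have z: "z \<in> C'" "z \<noteq> zvec"
      using ext_binary_linear_code x y \<open>x \<noteq> y\<close>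
      unfolding z_def binary_linear_code_def vadd_eq_zvec_iff by auto
    have "finite (supp x)" "finite (supp y)"
      using ext_binary_linear_code x(1) y(1) unfolding binary_linear_code_def
      by (auto intro: finite_supp_vecs)
    then have "wt z + 2 * wt x = wt x + wt y"
      using wt_vadd[of x y] supp_le unfolding z_def wt_def by (simp add: Int_absorb2)
    then have wts: "wt x = min_wt C" "wt z = min_wt C" "wt y = 2 * min_wt C"
      using ext_wt_bounds[OF x] ext_wt_bounds[OF y] ext_wt_bounds[OF z] by linarith+
    have "x 0 = 0" "z 0 = 0" "y 0 = 1"
      using ext_head_0_if_wt_eq_min_wt[OF x] ext_head_0_if_wt_eq_min_wt[OF z]
        ext_head_1_if_wt_eq_twice_min_wt[OF y] wts by simp_all
    then show False
      by (simp add: z_def vadd_def)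
  qed
qed

end

theorem proposition5p4:
  fixes m :: nat and C :: "bvec set" and r :: "nat \<Rightarrow> bvec"
  assumes "m \<ge> 3"
    and "binary_linear_code (2^(2*m-3) + 2^(m-2) - 1) C"
    and "code_dim C (2*m-2)"
    and "nonzero_weights C = {2^(2*m-4), 2^(2*m-4) + 2^(m-2)}"
    and "is_basis C (2*m-2) r"
    and "wt (r 1) = max_wt C"
    and "wt (r 2) = min_wt C"
  shows "binary_linear_code (3 * 2^(2*m-4) - 1) (ext_code C (2*m-2) r)
       \<and> code_dim (ext_code C (2*m-2) r) (2*m-2)
       \<and> min_distance (ext_code C (2*m-2) r) = 2^(2*m-4)
       \<and> minimal_code (ext_code C (2*m-2) r)
       \<and> max_wt (ext_code C (2*m-2) r) = 2^(2*m-3)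
       \<and> \<not> ashikhmin_barg (ext_code C (2*m-2) r)
       \<and> (m \<ge> 4 \<longrightarrow> self_orthogonal (3 * 2^(2*m-4) - 1) (ext_code C (2*m-2) r))"
proof -
  define A d :: nat where "A = 2^(2*m-4)" and "d = 2^(m-2)"
  have "d < A"
    unfolding A_def d_def using \<open>m \<ge> 3\<close> by (intro power_strict_increasing) auto
  have "2*m-3 = Suc (2*m-4)"
    using \<open>m \<ge> 3\<close> by simp
  then have twice_A: "2^(2*m-3) = 2 * A"
    unfolding A_def by (simp only: power_Suc)
  have weights_C: "nonzero_weights C = {A, A + d}"
    using assms(4) unfolding A_def d_def .
  then have min_C: "min_wt C = A" and max_C: "max_wt C = A + d"
    unfolding min_wt_def max_wt_def using \<open>d < A\<close> by simp_all
  interpret extension_construction "2^(2*m-3) + 2^(m-2) - 1" "2*m-2" C r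
    using assms(2,5-7) min_C max_C \<open>d < A\<close> \<open>m \<ge> 3\<close> by unfold_locales simp_all
  have length: "n' + (2^(2*m-3) + 2^(m-2) - 1) = 3 * 2^(2*m-4) - 1"
    unfolding min_C max_C twice_A A_def[symmetric] d_def[symmetric] using \<open>d < A\<close> by simp
  have "\<forall>w \<in> nonzero_weights C. 4 dvd w" if "m \<ge> 4"
    using le_imp_power_dvd[of 2 "m-2" "2::nat"] le_imp_power_dvd[of 2 "2*m-4" "2::nat"] that
    unfolding weights_C A_def d_def by simp
  moreover note ext_binary_linear_code ext_self_orthogonal_if_doubly_even
  moreover have "min_distance C' = 2^(2*m-4)" "max_wt C' = 2^(2*m-3)"
    unfolding ext_min_distance ext_max_wt min_C twice_A A_def by (rule refl)+
  ultimately show ?thesis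
    using ext_code_dim ext_minimal_code ext_not_ashikhmin_barg unfolding length by blast
qed

end
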